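(* Let $N\ge2$, $d\ge1$, let $E\subset\mathbb{Z}_N^d$, and let $\Sigma\subset\mathbb{Z}_N^d$ be a nonempty Salem set at level $\Lambda_{\text{Salem}}>0$. Then for every nonzero $f:\mathbb{Z}_N^d\to\mathbb{C}$ supported in $E$ whose Fourier transform $\hat f$ is supported in $\Sigma$, $$|E|\cdot|\Sigma|^{3/4}\ \ge\ N^d\sqrt{\frac{1-\mathrm{dens}(\Sigma)}{\Lambda_{\text{Salem}}}},$$ where $\mathrm{dens}(\Sigma)=N^{-d}|\Sigma|$.
   Context: $\chi(t)=e^{2\pi i t/N}$, $\hat f(m)=N^{-d}\sum_{x\in\mathbb{Z}_N^d}\chi(-x\cdot m)f(x)$. For a set $S$ we identify $S$ with its indicator function, so $\hat S(z)=N^{-d}\sum_{x\in S}\chi(-x\cdot z)$. A set $S\subset\mathbb{Z}_N^d$ is a Salem set at level $\Lambda_{\text{Salem}}$ if $|\hat S(z)|\le \Lambda_{\text{Salem}}N^{-d}|S|^{1/2}$ for all $z\ne 0$. *)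

theory Defs
  imports "HOL-Analysis.Analysis"
begin

text \<open>Z_N^d is represented by integer vectors x : nat => int with 0 <= x i < N for i < d
  and x i = 0 for i >= d (canonical representatives).\<close>
definition ZNd :: "nat \<Rightarrow> nat \<Rightarrow> (nat \<Rightarrow> int) set" where
  "ZNd N d = {x. (\<forall>i<d. 0 \<le> x i \<and> x i < int N) \<and> (\<forall>i\<ge>d. x i = 0)}"

definition dotp :: "nat \<Rightarrow> (nat \<Rightarrow> int) \<Rightarrow> (nat \<Rightarrow> int) \<Rightarrow> int" where
  "dotp d x m = (\<Sum>i<d. x i * m i)"

definition chi :: "nat \<Rightarrow> int \<Rightarrow> complex" where
  "chi N t = cis (2 * pi * real_of_int t / real N)"

definition fourier :: "nat \<Rightarrow> nat \<Rightarrow> ((nat \<Rightarrow> int) \<Rightarrow> complex) \<Rightarrow> (nat \<Rightarrow> int) \<Rightarrow> complex" where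
  "fourier N d f m = (1 / of_nat N ^ d) * (\<Sum>x\<in>ZNd N d. chi N (- dotp d x m) * f x)"

definition set_fourier :: "nat \<Rightarrow> nat \<Rightarrow> (nat \<Rightarrow> int) set \<Rightarrow> (nat \<Rightarrow> int) \<Rightarrow> complex" where
  "set_fourier N d S = fourier N d (\<lambda>x. if x \<in> S then 1 else 0)"

definition salem_set :: "nat \<Rightarrow> nat \<Rightarrow> real \<Rightarrow> (nat \<Rightarrow> int) set \<Rightarrow> bool" where
  "salem_set N d \<Lambda> S \<longleftrightarrow> S \<subseteq> ZNd N d \<and>
     (\<forall>z\<in>ZNd N d. z \<noteq> (\<lambda>_. 0) \<longrightarrow>
        cmod (set_fourier N d S z) \<le> \<Lambda> * (1 / real N ^ d) * sqrt (real (card S)))"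

definition dens :: "nat \<Rightarrow> nat \<Rightarrow> (nat \<Rightarrow> int) set \<Rightarrow> real" where
  "dens N d S = real (card S) / real N ^ d"

end

theory Submission
  imports Defs
begin

text \<open>Let \<open>x\<^sub>0\<close> maximise \<open>|f|\<close> and put \<open>M = |f x\<^sub>0|\<close>, \<open>n = N\<^sup>d\<close>, \<open>s = |\<Sigma>|\<close>, \<open>e = |E|\<close>.
  Fourier inversion writes \<open>f x\<^sub>0\<close> as a sum over \<open>\<Sigma>\<close> of \<open>\<chi>(x\<^sub>0\<cdot>m) f\<^sup>^(m)\<close> with
  \<open>|f\<^sup>^(m)| \<le> e M / n\<close>, whence \<open>n \<le> s e\<close>. Substituting the definition of \<open>f\<^sup>^\<close> instead gives
  \<open>n f(x\<^sub>0) = \<Sum>\<^sub>y f(y) K(x\<^sub>0 - y)\<close> with the kernel \<open>K(w) = \<Sum>\<^sub>m\<^sub>\<in>\<^sub>\<Sigma> \<chi>(w\<cdot>m)\<close>; here \<open>K(0) = s\<close>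
  and the Salem condition says \<open>|K(w)| \<le> \<Lambda> \<surd>s\<close> for \<open>w \<noteq> 0\<close>, whence \<open>n - s \<le> \<Lambda> \<surd>s e\<close>.
  Multiplying the two bounds gives \<open>n (n - s) \<le> \<Lambda> e\<^sup>2 s\<^sup>3\<^sup>/\<^sup>2\<close>.\<close>

lemma chi_add: "chi N (a + b) = chi N a * chi N b"
  unfolding chi_def by (simp add: cis_mult add_divide_distrib distrib_left)

lemma chi_0 [simp]: "chi N 0 = 1"
  by (simp add: chi_def)

lemma norm_chi [simp]: "cmod (chi N t) = 1"
  by (simp add: chi_def)

lemma chi_mod_eq:
  assumes "N > 0" and "a mod int N = b mod int N"
  shows "chi N a = chi N b"
proof -
  obtain k where "a - b = int N * k"
    using assms(2) by (auto simp: mod_eq_dvd_iff dvd_def)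
  hence "a = b + k * int N" by (simp add: algebra_simps)
  moreover have "2 * pi * real_of_int (k * int N) / real N = 2 * pi * real_of_int k"
    using assms(1) by simp
  hence "chi N (k * int N) = 1" by (simp add: chi_def)
  ultimately show ?thesis by (simp add: chi_add)
qed

lemma chi_neq_1:
  assumes "N > 0" and "\<not> int N dvd t"
  shows "chi N t \<noteq> 1"
proof
  assume "chi N t = 1"
  hence "cos (2 * pi * real_of_int t / real N) = 1"
    using arg_cong[of _ _ Re] unfolding chi_def by (metis Re_complex_of_real cis.sel(1) one_complex.sel(1))
  then obtain k :: int where "2 * pi * real_of_int t / real N = of_int k * 2 * pi"
    using cos_one_2pi_int by blast
  hence "real_of_int t = real_of_int k * real N"
    using assms(1) by (simp add: field_simps)
  hence "t = k * int N" by (metis of_int_eq_iff of_int_mult of_int_of_nat_eq)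
  thus False using assms(2) by simp
qed

lemma ZNd_eq_image_PiE:
  "ZNd N d = (\<lambda>p i. if i < d then p i else 0) ` (PiE {..<d} (\<lambda>_. {0..<int N}))"
proof (intro equalityI subsetI)
  fix x assume x: "x \<in> ZNd N d"
  hence "x = (\<lambda>i. if i < d then restrict x {..<d} i else 0)"
    unfolding ZNd_def by (auto simp: fun_eq_iff)
  moreover have "restrict x {..<d} \<in> PiE {..<d} (\<lambda>_. {0..<int N})"
    using x unfolding ZNd_def by auto
  ultimately show "x \<in> (\<lambda>p i. if i < d then p i else 0) ` (PiE {..<d} (\<lambda>_. {0..<int N}))"
    by blast
qed (auto simp: ZNd_def PiE_def Pi_def)

lemma inj_on_extend_by_zero:
  "inj_on (\<lambda>p i. if i < d then p i else 0) (PiE {..<d} A)"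
proof (rule inj_onI, rule ext)
  fix p q i
  assume "p \<in> PiE {..<d} A" "q \<in> PiE {..<d} A"
    and "(\<lambda>i. if i < d then p i else 0) = (\<lambda>i. if i < d then q i else 0)"
  then show "p i = q i"
    by (cases "i < d") (auto simp: PiE_def extensional_def dest: fun_cong[of _ _ i])
qed

lemma card_ZNd: "card (ZNd N d) = N ^ d"
  unfolding ZNd_eq_image_PiE by (simp add: card_image[OF inj_on_extend_by_zero] card_PiE)

lemma finite_ZNd [simp]: "finite (ZNd N d)"
  unfolding ZNd_eq_image_PiE by (simp add: finite_PiE)

lemma ZNd_neq_imp_coord_ndvd:
  assumes x: "x \<in> ZNd N d" and y: "y \<in> ZNd N d" and "x \<noteq> y"
  obtains i where "i < d" "\<not> int N dvd (x i - y i)"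
proof -
  obtain i where xi: "x i \<noteq> y i" using \<open>x \<noteq> y\<close> by auto
  have i: "i < d"
  proof (rule ccontr)
    assume "\<not> i < d"
    with x y xi show False unfolding ZNd_def by simp
  qed
  have "0 \<le> x i" "x i < int N" "0 \<le> y i" "y i < int N"
    using x y i unfolding ZNd_def by auto
  moreover have "int N dvd (x i - y i) \<Longrightarrow> \<bar>int N\<bar> \<le> \<bar>x i - y i\<bar>"
    using xi by (intro dvd_imp_le_int) auto
  ultimately have "\<not> int N dvd (x i - y i)" by linarith
  with i that show ?thesis by blast
qed

lemma dotp_mod_cong:
  assumes "\<And>j. j < d \<Longrightarrow> a j mod int N = b j mod int N"
  shows "dotp d u a mod int N = dotp d u b mod int N"
proof -
  have "u i * a i mod int N = u i * b i mod int N" if "i < d" for i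
    using assms[OF that] by (metis mod_mult_right_eq)
  hence "(\<Sum>i<d. u i * a i mod int N) mod int N = (\<Sum>i<d. u i * b i mod int N) mod int N"
    by (metis (no_types, lifting) lessThan_iff sum.cong)
  thus ?thesis unfolding dotp_def by (simp only: mod_sum_eq)
qed

lemma dotp_fun_upd:
  assumes "i < d"
  shows "dotp d u (m(i := v)) = dotp d u m + u i * (v - m i)"
proof -
  have "dotp d u (m(i := v)) = (\<Sum>j<d. u j * m j + (if j = i then u i * (v - m i) else 0))"
    unfolding dotp_def by (rule sum.cong) (auto simp: algebra_simps)
  thus ?thesis unfolding dotp_def sum.distrib using assms by simp
qed

lemma dotp_diff_left: "dotp d (x - y) m = dotp d x m - dotp d y m"
  unfolding dotp_def by (simp add: algebra_simps sum_subtractf)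

lemma bij_betw_shift_coord:
  assumes "N > 0" and "i < d"
  shows "bij_betw (\<lambda>m. m(i := (m i + 1) mod int N)) (ZNd N d) (ZNd N d)"
proof (rule bij_betw_byWitness[where f' = "\<lambda>m. m(i := (m i - 1) mod int N)"])
  have coord: "0 \<le> m i \<and> m i < int N" if "m \<in> ZNd N d" for m
    using that assms(2) unfolding ZNd_def by auto
  show "\<forall>m\<in>ZNd N d. (m(i := (m i + 1) mod int N))(i := ((m(i := (m i + 1) mod int N)) i - 1) mod int N) = m"
    using coord by (auto simp: mod_diff_left_eq mod_pos_pos_trivial)
  show "\<forall>m\<in>ZNd N d. (m(i := (m i - 1) mod int N))(i := ((m(i := (m i - 1) mod int N)) i + 1) mod int N) = m"
    using coord by (auto simp: mod_add_left_eq mod_pos_pos_trivial)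
qed (use assms in \<open>auto simp: ZNd_def\<close>)

text \<open>Translating the \<open>i\<close>-th coordinate multiplies the sum by \<open>\<chi>(u\<^sub>i) \<noteq> 1\<close>.\<close>
lemma sum_chi_dotp_ZNd_eq_0:
  assumes N: "N > 0" and i: "i < d" and "\<not> int N dvd u i"
  shows "(\<Sum>m\<in>ZNd N d. chi N (dotp d u m)) = 0"
proof -
  define S where "S = (\<Sum>m\<in>ZNd N d. chi N (dotp d u m))"
  have shift: "chi N (dotp d u (m(i := (m i + 1) mod int N))) = chi N (u i) * chi N (dotp d u m)" for m
  proof -
    have "dotp d u (m(i := (m i + 1) mod int N)) mod int N = dotp d u (m(i := m i + 1)) mod int N"
      by (rule dotp_mod_cong) auto
    also have "dotp d u (m(i := m i + 1)) = u i + dotp d u m"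
      using dotp_fun_upd[OF i] by simp
    finally show ?thesis using chi_mod_eq[OF N] chi_add by metis
  qed
  have "S = (\<Sum>m\<in>ZNd N d. chi N (dotp d u (m(i := (m i + 1) mod int N))))"
    unfolding S_def by (rule sum.reindex_bij_betw[OF bij_betw_shift_coord[OF N i], symmetric])
  also have "\<dots> = chi N (u i) * S"
    unfolding S_def shift by (simp add: sum_distrib_left)
  finally have "(1 - chi N (u i)) * S = 0" by (simp add: algebra_simps)
  with chi_neq_1[OF N assms(3)] show ?thesis unfolding S_def by simp
qed

definition char_sum :: "nat \<Rightarrow> nat \<Rightarrow> (nat \<Rightarrow> int) set \<Rightarrow> (nat \<Rightarrow> int) \<Rightarrow> complex" where
  "char_sum N d S w = (\<Sum>m\<in>S. chi N (dotp d w m))"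

lemma char_sum_0: "char_sum N d S (\<lambda>_. 0) = of_nat (card S)"
  by (simp add: char_sum_def dotp_def)

lemma char_sum_ZNd_diff:
  assumes "N > 0" and "x \<in> ZNd N d" and "y \<in> ZNd N d"
  shows "char_sum N d (ZNd N d) (x - y) = (if y = x then of_nat N ^ d else 0)"
proof (cases "y = x")
  case True
  thus ?thesis using char_sum_0[of N d "ZNd N d"] by (simp add: card_ZNd fun_diff_def)
next
  case False
  then obtain i where "i < d" "\<not> int N dvd (x i - y i)"
    using ZNd_neq_imp_coord_ndvd[OF assms(2,3)] by metis
  with False show ?thesis
    using sum_chi_dotp_ZNd_eq_0[OF assms(1), of i d "x - y"] by (simp add: char_sum_def)
qed

lemma sum_chi_fourier_eq_char_sum:
  "(\<Sum>m\<in>T. chi N (dotp d x m) * fourier N d f m) =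
     (1 / of_nat N ^ d) * (\<Sum>y\<in>ZNd N d. f y * char_sum N d T (x - y))"
proof -
  have summand: "chi N (dotp d x m) * (chi N (- dotp d y m) * f y) = f y * chi N (dotp d (x - y) m)" for m y
    unfolding dotp_diff_left by (simp add: chi_add[symmetric])
  have "(\<Sum>m\<in>T. chi N (dotp d x m) * fourier N d f m) =
      (\<Sum>m\<in>T. (1 / of_nat N ^ d) * (\<Sum>y\<in>ZNd N d. chi N (dotp d x m) * (chi N (- dotp d y m) * f y)))"
    unfolding fourier_def sum_distrib_left by (simp add: mult.left_commute)
  also have "\<dots> = (1 / of_nat N ^ d) * (\<Sum>y\<in>ZNd N d. f y * char_sum N d T (x - y))"
    unfolding summand char_sum_def by (simp add: sum.swap[of _ T] sum_distrib_left)
  finally show ?thesis .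
qed

lemma fourier_inversion:
  assumes "N > 0" and x: "x \<in> ZNd N d"
  shows "(\<Sum>m\<in>ZNd N d. chi N (dotp d x m) * fourier N d f m) = f x"
proof -
  have "(\<Sum>y\<in>ZNd N d. f y * char_sum N d (ZNd N d) (x - y)) = (\<Sum>y\<in>ZNd N d. if y = x then f x * of_nat N ^ d else 0)"
    using assms by (intro sum.cong) (auto simp: char_sum_ZNd_diff)
  thus ?thesis using assms by (simp add: sum_chi_fourier_eq_char_sum)
qed

lemma fourier_inversion_on_support:
  assumes "N > 0" and "x \<in> ZNd N d" and "\<Sigma> \<subseteq> ZNd N d"
    and "\<forall>m\<in>ZNd N d. m \<notin> \<Sigma> \<longrightarrow> fourier N d f m = 0"
  shows "f x = (\<Sum>m\<in>\<Sigma>. chi N (dotp d x m) * fourier N d f m)"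
  using fourier_inversion[OF assms(1,2), of f, symmetric]
    sum.mono_neutral_right[OF finite_ZNd assms(3), of "\<lambda>m. chi N (dotp d x m) * fourier N d f m"]
    assms(4)
  by auto

text \<open>The Salem bound for \<open>\<Sigma>\<close> at frequency \<open>y - x\<close> (reduced mod \<open>N\<close>) is a bound on the kernel at \<open>x - y\<close>.\<close>
lemma norm_char_sum_le_salem:
  assumes N: "N > 0" and x: "x \<in> ZNd N d" and y: "y \<in> ZNd N d" and "y \<noteq> x"
    and salem: "salem_set N d \<Lambda> S"
  shows "cmod (char_sum N d S (x - y)) \<le> \<Lambda> * sqrt (real (card S))"
proof -
  have SZ: "S \<subseteq> ZNd N d" using salem unfolding salem_set_def by simp
  define z where "z = (\<lambda>i. if i < d then (y i - x i) mod int N else 0)"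
  have z: "z \<in> ZNd N d" unfolding z_def ZNd_def using N by auto
  have "z \<noteq> (\<lambda>_. 0)"
  proof
    assume "z = (\<lambda>_. 0)"
    moreover obtain i where "i < d" "\<not> int N dvd (y i - x i)"
      using ZNd_neq_imp_coord_ndvd[OF y x \<open>y \<noteq> x\<close>] by metis
    ultimately show False unfolding z_def by (metis dvd_eq_mod_eq_0)
  qed
  with salem z have bound: "cmod (set_fourier N d S z) \<le> \<Lambda> * (1 / real N ^ d) * sqrt (real (card S))"
    unfolding salem_set_def by blast
  have "chi N (- dotp d m z) = chi N (dotp d (x - y) m)" for m
  proof -
    have "- dotp d m z = dotp d (- m) z" unfolding dotp_def by (simp add: sum_negf)
    moreover have "dotp d (- m) z mod int N = dotp d (- m) (y - x) mod int N"
      by (rule dotp_mod_cong) (simp add: z_def)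
    moreover have "dotp d (- m) (y - x) = dotp d (x - y) m"
      unfolding dotp_def by (rule sum.cong) (auto simp: algebra_simps)
    ultimately show ?thesis using chi_mod_eq[OF N] by metis
  qed
  hence "set_fourier N d S z = (1 / of_nat N ^ d) * char_sum N d S (x - y)"
    using SZ unfolding set_fourier_def fourier_def char_sum_def
    by (simp add: if_distrib sum.inter_restrict[symmetric] Int_absorb1 cong: if_cong)
  hence "cmod (char_sum N d S (x - y)) = real N ^ d * cmod (set_fourier N d S z)"
    using N by (simp add: norm_mult norm_divide norm_power)
  also have "\<dots> \<le> \<Lambda> * sqrt (real (card S))"
    using bound N by (simp add: mult_left_mono divide_simps mult.commute)
  finally show ?thesis .
qed

lemma ZNd_norm_maximiser:
  assumes "\<exists>x\<in>ZNd N d. f x \<noteq> 0"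
  obtains x\<^sub>0 where "x\<^sub>0 \<in> ZNd N d" "f x\<^sub>0 \<noteq> 0" "\<forall>y\<in>ZNd N d. cmod (f y) \<le> cmod (f x\<^sub>0)"
proof -
  define M where "M = Max ((\<lambda>x. cmod (f x)) ` ZNd N d)"
  have "M \<in> (\<lambda>x. cmod (f x)) ` ZNd N d"
    unfolding M_def using assms by (intro Max_in) auto
  then obtain x\<^sub>0 where x\<^sub>0: "x\<^sub>0 \<in> ZNd N d" "cmod (f x\<^sub>0) = M" by auto
  have max: "\<forall>y\<in>ZNd N d. cmod (f y) \<le> cmod (f x\<^sub>0)"
    unfolding x\<^sub>0(2) M_def by simp
  with assms have "f x\<^sub>0 \<noteq> 0" by force
  with x\<^sub>0(1) max that show ?thesis by blast
qed

lemma sum_norm_le_card_support: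
  assumes "finite Z" and "E \<subseteq> Z" and "\<forall>x\<in>Z. x \<notin> E \<longrightarrow> f x = 0"
    and "\<forall>y\<in>Z. cmod (f y) \<le> M"
  shows "(\<Sum>x\<in>Z. cmod (f x)) \<le> real (card E) * M"
proof -
  have "(\<Sum>x\<in>Z. cmod (f x)) = (\<Sum>x\<in>E. cmod (f x))"
    using assms(1-3) by (intro sum.mono_neutral_right) auto
  also have "\<dots> \<le> (\<Sum>x\<in>E. M)"
    using assms(2,4) by (intro sum_mono) auto
  finally show ?thesis by simp
qed

lemma norm_fourier_le:
  "cmod (fourier N d f m) \<le> (\<Sum>x\<in>ZNd N d. cmod (f x)) / real N ^ d"
proof -
  have "cmod (\<Sum>x\<in>ZNd N d. chi N (- dotp d x m) * f x) \<le> (\<Sum>x\<in>ZNd N d. cmod (f x))"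
    using norm_sum[of "\<lambda>x. chi N (- dotp d x m) * f x"] by (simp add: norm_mult)
  thus ?thesis
    unfolding fourier_def by (simp add: norm_mult norm_divide norm_power divide_right_mono)
qed

lemma support_uncertainty:
  assumes N: "N > 0" and E: "E \<subseteq> ZNd N d" and \<Sigma>: "\<Sigma> \<subseteq> ZNd N d"
    and nonzero: "\<exists>x\<in>ZNd N d. f x \<noteq> 0"
    and supp: "\<forall>x\<in>ZNd N d. x \<notin> E \<longrightarrow> f x = 0"
    and fourier_supp: "\<forall>m\<in>ZNd N d. m \<notin> \<Sigma> \<longrightarrow> fourier N d f m = 0"
  shows "real N ^ d \<le> real (card \<Sigma>) * real (card E)"
proof -
  obtain x\<^sub>0 where x\<^sub>0: "x\<^sub>0 \<in> ZNd N d" "f x\<^sub>0 \<noteq> 0" "\<forall>y\<in>ZNd N d. cmod (f y) \<le> cmod (f x\<^sub>0)"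
    using ZNd_norm_maximiser[OF nonzero] by blast
  define M where "M = cmod (f x\<^sub>0)"
  have fourier_bound: "cmod (fourier N d f m) \<le> real (card E) * M / real N ^ d" for m
    using norm_fourier_le[of N d f m] sum_norm_le_card_support[OF finite_ZNd E supp] x\<^sub>0(3)
    unfolding M_def by (meson divide_right_mono order_trans zero_le_power of_nat_0_le_iff)
  have "M \<le> (\<Sum>m\<in>\<Sigma>. cmod (chi N (dotp d x\<^sub>0 m) * fourier N d f m))"
    unfolding M_def fourier_inversion_on_support[OF N x\<^sub>0(1) \<Sigma> fourier_supp] by (rule norm_sum)
  also have "\<dots> \<le> (\<Sum>m\<in>\<Sigma>. real (card E) * M / real N ^ d)"
    by (intro sum_mono) (simp add: norm_mult fourier_bound)
  finally have "M * real N ^ d \<le> real (card \<Sigma>) * real (card E) * M"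
    using N by (simp add: field_simps)
  moreover have "M > 0" using x\<^sub>0(2) unfolding M_def by simp
  ultimately show ?thesis by (simp add: mult.commute)
qed

lemma salem_uncertainty:
  assumes N: "N > 0" and E: "E \<subseteq> ZNd N d" and \<Sigma>: "\<Sigma> \<subseteq> ZNd N d"
    and "\<Lambda> \<ge> 0" and salem: "salem_set N d \<Lambda> \<Sigma>"
    and nonzero: "\<exists>x\<in>ZNd N d. f x \<noteq> 0"
    and supp: "\<forall>x\<in>ZNd N d. x \<notin> E \<longrightarrow> f x = 0"
    and fourier_supp: "\<forall>m\<in>ZNd N d. m \<notin> \<Sigma> \<longrightarrow> fourier N d f m = 0"
  shows "real N ^ d - real (card \<Sigma>) \<le> \<Lambda> * sqrt (real (card \<Sigma>)) * real (card E)"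
proof -
  define Z where "Z = ZNd N d"
  define K where "K = char_sum N d \<Sigma>"
  define n where "n = real N ^ d"
  define s where "s = real (card \<Sigma>)"
  obtain x\<^sub>0 where x\<^sub>0: "x\<^sub>0 \<in> Z" "f x\<^sub>0 \<noteq> 0" "\<forall>y\<in>Z. cmod (f y) \<le> cmod (f x\<^sub>0)"
    using ZNd_norm_maximiser[OF nonzero] unfolding Z_def by blast
  define M where "M = cmod (f x\<^sub>0)"
  have "of_real n * f x\<^sub>0 = (\<Sum>y\<in>Z. f y * K (x\<^sub>0 - y))"
    using fourier_inversion_on_support[OF N _ \<Sigma> fourier_supp, of x\<^sub>0] x\<^sub>0(1) N
    unfolding Z_def K_def n_def sum_chi_fourier_eq_char_sum by simp
  also have "\<dots> = f x\<^sub>0 * K (x\<^sub>0 - x\<^sub>0) + (\<Sum>y\<in>Z - {x\<^sub>0}. f y * K (x\<^sub>0 - y))"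
    using x\<^sub>0(1) unfolding Z_def by (simp add: sum.remove)
  also have "K (x\<^sub>0 - x\<^sub>0) = of_real s"
    using char_sum_0[of N d \<Sigma>] unfolding K_def s_def by (simp add: fun_diff_def)
  finally have convolution: "of_real (n - s) * f x\<^sub>0 = (\<Sum>y\<in>Z - {x\<^sub>0}. f y * K (x\<^sub>0 - y))"
    by (metis add_diff_cancel_left' left_diff_distrib mult.commute of_real_diff)
  have "(n - s) * M \<le> cmod (of_real (n - s) * f x\<^sub>0)"
    unfolding M_def norm_mult by (simp add: mult_right_mono del: of_real_diff)
  also have "\<dots> \<le> (\<Sum>y\<in>Z - {x\<^sub>0}. cmod (f y) * (\<Lambda> * sqrt s))"
    unfolding convolution using norm_char_sum_le_salem[OF N x\<^sub>0(1)[unfolded Z_def] _ _ salem]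
    by (intro order_trans[OF norm_sum] sum_mono)
       (auto simp: norm_mult Z_def K_def s_def intro: mult_left_mono)
  also have "\<dots> \<le> (\<Sum>y\<in>Z. cmod (f y)) * (\<Lambda> * sqrt s)"
    unfolding sum_distrib_right using \<open>\<Lambda> \<ge> 0\<close> by (intro sum_mono2) (auto simp: Z_def s_def)
  also have "\<dots> \<le> real (card E) * M * (\<Lambda> * sqrt s)"
    using sum_norm_le_card_support[OF finite_ZNd E supp] x\<^sub>0(3) \<open>\<Lambda> \<ge> 0\<close>
    unfolding Z_def M_def s_def by (intro mult_right_mono) auto
  finally have "(n - s) * M \<le> \<Lambda> * sqrt s * real (card E) * M"
    by (simp add: algebra_simps)
  moreover have "M > 0" using x\<^sub>0(2) unfolding M_def by simp
  ultimately show ?thesis unfolding n_def s_def by simp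
qed

lemma powr_three_quarters: "s \<ge> 0 \<Longrightarrow> s powr (3/4) = sqrt (s * sqrt s)"
  for s :: real
proof -
  assume "s \<ge> 0"
  have "s powr (3/2) = s powr (1 + 1/2)" by simp
  also have "\<dots> = s powr 1 * s powr (1/2)" by (rule powr_add)
  finally have "s * sqrt s = s powr (3/2)"
    using \<open>s \<ge> 0\<close> by (cases "s = 0") (simp_all add: powr_half_sqrt)
  thus ?thesis using \<open>s \<ge> 0\<close> by (simp add: powr_half_sqrt[symmetric] powr_powr)
qed

lemma uncertainty_product_bound:
  fixes n s e \<Lambda> :: real
  assumes "n > 0" and "s > 0" and "\<Lambda> > 0" and "e \<ge> 0"
    and "n \<le> s * e" and "n - s \<le> \<Lambda> * sqrt s * e"
  shows "n * sqrt ((1 - s / n) / \<Lambda>) \<le> e * s powr (3/4)"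
proof (cases "n \<ge> s")
  case False
  with assms have "(1 - s / n) / \<Lambda> \<le> 0" by (simp add: divide_nonpos_pos field_simps)
  with assms show ?thesis by (simp add: mult_nonneg_nonpos order_trans[of _ 0])
next
  case True
  have "n * sqrt ((1 - s / n) / \<Lambda>) = sqrt (n * (n - s) / \<Lambda>)"
  proof -
    have "n * sqrt ((1 - s / n) / \<Lambda>) = sqrt (n\<^sup>2) * sqrt ((1 - s / n) / \<Lambda>)"
      using assms(1) by simp
    also have "\<dots> = sqrt (n\<^sup>2 * ((1 - s / n) / \<Lambda>))"
      by (rule real_sqrt_mult[symmetric])
    also have "n\<^sup>2 * ((1 - s / n) / \<Lambda>) = n * (n - s) / \<Lambda>"
      using assms(1,3) by (simp add: power2_eq_square field_simps)
    finally show ?thesis .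
  qed
  also have "\<dots> \<le> sqrt ((s * e) * (\<Lambda> * sqrt s * e) / \<Lambda>)"
    using assms True by (intro real_sqrt_le_mono divide_right_mono mult_mono) auto
  also have "(s * e) * (\<Lambda> * sqrt s * e) / \<Lambda> = e\<^sup>2 * (s * sqrt s)"
    using assms(3) by (simp add: power2_eq_square field_simps)
  also have "sqrt (e\<^sup>2 * (s * sqrt s)) = e * s powr (3/4)"
    using assms(2,4) by (simp add: powr_three_quarters real_sqrt_mult)
  finally show ?thesis .
qed

theorem theorem3:
  fixes N d :: nat and E \<Sigma> :: "(nat \<Rightarrow> int) set" and \<Lambda> :: real
    and f :: "(nat \<Rightarrow> int) \<Rightarrow> complex"
  assumes "N \<ge> 2" and "d \<ge> 1"
    and "E \<subseteq> ZNd N d" and "\<Sigma> \<subseteq> ZNd N d" and "\<Sigma> \<noteq> {}"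
    and "\<Lambda> > 0" and "salem_set N d \<Lambda> \<Sigma>"
    and "\<exists>x\<in>ZNd N d. f x \<noteq> 0"
    and "\<forall>x\<in>ZNd N d. x \<notin> E \<longrightarrow> f x = 0"
    and "\<forall>m\<in>ZNd N d. m \<notin> \<Sigma> \<longrightarrow> fourier N d f m = 0"
  shows "real (card E) * real (card \<Sigma>) powr (3/4)
           \<ge> real N ^ d * sqrt ((1 - dens N d \<Sigma>) / \<Lambda>)"
proof -
  have N: "N > 0" using assms(1) by simp
  have "card \<Sigma> > 0"
    using assms(4,5) finite_subset[OF assms(4) finite_ZNd] by (simp add: card_gt_0_iff)
  moreover have "real N ^ d \<le> real (card \<Sigma>) * real (card E)"
    using support_uncertainty[OF N assms(3,4,8-10)] .
  moreover have "real N ^ d - real (card \<Sigma>) \<le> \<Lambda> * sqrt (real (card \<Sigma>)) * real (card E)"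
    using salem_uncertainty[OF N assms(3,4) _ assms(7-10)] assms(6) by simp
  ultimately show ?thesis
    unfolding dens_def using uncertainty_product_bound[of "real N ^ d" "real (card \<Sigma>)" \<Lambda> "real (card E)"]
      N assms(6) by simp
qed

end
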